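(* Let $m<n$ be natural numbers, let $\mathcal{I}$ be the ideal of thin subsets of $[\omega]^n$, and let $\psi=\lambda^{(n-m)}\partial^{(n-m)}$. Then there is $S\subseteq[\omega]^n$ which is not $(<\!\aleph_0)$-near-closed.
   Context: $T\subseteq[\omega]^n$ is thick if for every $j\geq n$ there is $s\in[\omega]^j$ with $[s]^n\subseteq T$; thin otherwise. For $T\subseteq[\omega]^n$, $\partial^{(n-m)}T=\{s\in[\omega]^m:\exists t\in[\omega]^{n-m}\ (s\cup t\in T)\}$, and for $A\subseteq[\omega]^m$, $\lambda^{(n-m)}A=\{s\in[\omega]^n:[s]^m\subseteq A\}$. A set $T\subseteq[\omega]^n$ is closed if $\psi(T)=T$. A set $S$ is $(<\!\aleph_0)$-near-closed if there are $k<\omega$ and closed $T_0,\dots,T_{k-1}$ with $S\,\Delta\,(T_0\cup\dots\cup T_{k-1})\in\mathcal{I}$. *)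

theory Defs
  imports Main "HOL-Library.Ramsey"
begin

text \<open>[omega]^n is nsets UNIV n (finite sets of naturals of cardinality n).\<close>

definition thick :: "nat \<Rightarrow> nat set set \<Rightarrow> bool" where
  "thick n T \<longleftrightarrow> (\<forall>j\<ge>n. \<exists>s\<in>nsets (UNIV::nat set) j. nsets s n \<subseteq> T)"

definition thin :: "nat \<Rightarrow> nat set set \<Rightarrow> bool" where
  "thin n T \<longleftrightarrow> \<not> thick n T"

definition in_thin_ideal :: "nat \<Rightarrow> nat set set \<Rightarrow> bool" where
  "in_thin_ideal n T \<longleftrightarrow> T \<subseteq> nsets UNIV n \<and> thin n T"

definition shadow :: "nat \<Rightarrow> nat \<Rightarrow> nat set set \<Rightarrow> nat set set" where
  "shadow n m T = {s \<in> nsets UNIV m. \<exists>t\<in>nsets UNIV (n - m). s \<union> t \<in> T}"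

definition lam :: "nat \<Rightarrow> nat \<Rightarrow> nat set set \<Rightarrow> nat set set" where
  "lam n m A = {s \<in> nsets UNIV n. nsets s m \<subseteq> A}"

definition psi :: "nat \<Rightarrow> nat \<Rightarrow> nat set set \<Rightarrow> nat set set" where
  "psi n m T = lam n m (shadow n m T)"

definition psi_closed :: "nat \<Rightarrow> nat \<Rightarrow> nat set set \<Rightarrow> bool" where
  "psi_closed n m T \<longleftrightarrow> T \<subseteq> nsets UNIV n \<and> psi n m T = T"

definition near_closed :: "nat \<Rightarrow> nat \<Rightarrow> nat set set \<Rightarrow> bool" where
  "near_closed n m S \<longleftrightarrow> (\<exists>k::nat. \<exists>Ts::nat \<Rightarrow> nat set set.
     (\<forall>i<k. psi_closed n m (Ts i)) \<and>
     in_thin_ideal n ((S - (\<Union>i<k. Ts i)) \<union> ((\<Union>i<k. Ts i) - S)))"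

end

theory Submission
  imports Defs "HOL-Computational_Algebra.Polynomial"
begin

(* Take pairwise disjoint finite blocks G_r of naturals and in each a set chi_r of n-subsets
   that disagrees with every union of r sets lambda^(n-m) A, A a set of m-subsets of G_r,
   on all n-subsets of some (r+n)-subset of G_r. Such chi_r exist by counting: G_r carries
   c^n sets of size r+n meeting pairwise in fewer than n points (graphs of polynomials of
   degree below n), so their n-subsets are disjoint patches, and chi_r can be chosen patch
   by patch against the comparatively few competitors. If S, the union of the chi_r, were
   near-closed via k closed sets T_i, then inside the block G_r with r >= k each T_i
   coincides with lambda^(n-m) of its shadow, so the symmetric difference of S and the union
   of the T_i contains all n-subsets of sets of every size r+n: it is thick, not thin. *)

lemma popular_trace:
  assumes "finite P" "finite \<V>"
  obtains X where "X \<subseteq> P" "card \<V> \<le> 2 ^ card P * card {V \<in> \<V>. V \<inter> P = X}"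
proof -
  define cls where "cls X = {V \<in> \<V>. V \<inter> P = X}" for X
  let ?N = "(\<lambda>Y. card (cls Y)) ` Pow P"
  have "Max ?N \<in> ?N" using assms(1) by (intro Max_in) auto
  then obtain X where X: "X \<subseteq> P" "card (cls X) = Max ?N" by auto
  have max: "card (cls Y) \<le> card (cls X)" if "Y \<subseteq> P" for Y
    unfolding X(2) using that assms(1) by (intro Max_ge) auto
  have "\<V> = (\<Union>Y\<in>Pow P. cls Y)" by (auto simp: cls_def)
  then have "card \<V> \<le> (\<Sum>Y\<in>Pow P. card (cls Y))"
    using card_UN_le[of "Pow P" cls] assms(1) by simp
  also have "\<dots> \<le> (\<Sum>Y\<in>Pow P. card (cls X))" using max by (intro sum_mono) auto
  also have "\<dots> = 2 ^ card P * card (cls X)" using assms(1) by (simp add: card_Pow)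
  finally show ?thesis using that X(1) unfolding cls_def by blast
qed

text \<open>On each new patch, \<open>\<chi>\<close> is the complement of the most frequent trace; this defeats at
  least a \<open>1/D\<close> fraction of the remaining competitors.\<close>
lemma patchwise_diagonalization:
  fixes P :: "'i \<Rightarrow> 'a set" and \<V> :: "'a set set"
  assumes "finite F" "finite \<V>"
    and "\<And>M. M \<in> F \<Longrightarrow> finite (P M) \<and> 2 ^ card (P M) \<le> D"
    and "\<And>M M'. M \<in> F \<Longrightarrow> M' \<in> F \<Longrightarrow> M \<noteq> M' \<Longrightarrow> P M \<inter> P M' = {}"
    and "card \<V> * (D - 1) ^ card F < D ^ card F"
  shows "\<exists>\<chi> \<subseteq> \<Union>(P ` F). \<forall>V\<in>\<V>. \<exists>M\<in>F. \<forall>Z\<in>P M. Z \<in> \<chi> \<longleftrightarrow> Z \<notin> V"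
  using assms
proof (induction F arbitrary: \<V> rule: finite_induct)
  case empty
  then show ?case by simp
next
  case (insert M F)
  have finP: "finite (P M)" and D: "2 ^ card (P M) \<le> D" using insert.prems(2) by auto
  obtain X where X: "X \<subseteq> P M" "card \<V> \<le> 2 ^ card (P M) * card {V \<in> \<V>. V \<inter> P M = X}"
    using popular_trace[OF finP insert.prems(1)] .
  define \<V>' where "\<V>' = \<V> - {V \<in> \<V>. V \<inter> P M = X}"
  have card_\<V>': "card \<V>' = card \<V> - card {V \<in> \<V>. V \<inter> P M = X}"
    unfolding \<V>'_def using insert.prems(1) by (intro card_Diff_subset) auto
  have "card \<V> \<le> D * card {V \<in> \<V>. V \<inter> P M = X}"
    using X(2) D by (meson le_trans mult_le_mono1)
  then have "card \<V>' * D \<le> card \<V> * (D - 1)"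
    by (simp add: card_\<V>' diff_mult_distrib diff_mult_distrib2 mult.commute diff_le_mono2)
  then have "card \<V>' * (D - 1) ^ card F * D \<le> card \<V> * (D - 1) ^ card (insert M F)"
    using insert.hyps by (simp add: mult_le_mono1 ac_simps)
  also have "\<dots> < D ^ card F * D" using insert.prems(4) insert.hyps by (simp add: mult.commute)
  finally have "card \<V>' * (D - 1) ^ card F < D ^ card F" by simp
  then obtain \<chi> where \<chi>: "\<chi> \<subseteq> \<Union>(P ` F)" "\<forall>V\<in>\<V>'. \<exists>M\<in>F. \<forall>Z\<in>P M. Z \<in> \<chi> \<longleftrightarrow> Z \<notin> V"
    using insert.IH[of \<V>'] insert.prems unfolding \<V>'_def by auto
  show ?case
  proof (intro exI[of _ "(\<chi> - P M) \<union> (P M - X)"] conjI ballI)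
    fix V assume "V \<in> \<V>"
    show "\<exists>M'\<in>insert M F. \<forall>Z\<in>P M'. Z \<in> (\<chi> - P M) \<union> (P M - X) \<longleftrightarrow> Z \<notin> V"
    proof (cases "V \<inter> P M = X")
      case True
      then show ?thesis by blast
    next
      case False
      with \<open>V \<in> \<V>\<close> obtain M' where "M' \<in> F" "\<forall>Z\<in>P M'. Z \<in> \<chi> \<longleftrightarrow> Z \<notin> V"
        using \<chi>(2) unfolding \<V>'_def by blast
      moreover have "P M' \<inter> P M = {}"
        using insert.prems(3) insert.hyps(2) \<open>M' \<in> F\<close> by (metis insertCI)
      ultimately show ?thesis by blast
    qed
  qed (use \<chi>(1) in auto)
qed

lemma bernoulli_inequality_nat: "(y::nat) ^ N * (y + N) \<le> y * (y + 1) ^ N"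
proof (induction N)
  case 0
  then show ?case by simp
next
  case (Suc N)
  have "y ^ Suc N * (y + Suc N) = y ^ N * (y * (y + N + 1))" by (simp add: algebra_simps)
  also have "\<dots> \<le> y ^ N * ((y + 1) * (y + N))" by (simp add: algebra_simps)
  also have "\<dots> = (y + 1) * (y ^ N * (y + N))" by (simp add: algebra_simps)
  also have "\<dots> \<le> (y + 1) * (y * (y + 1) ^ N)" using Suc.IH by (rule mult_le_mono2)
  also have "\<dots> = y * (y + 1) ^ Suc N" by (simp add: algebra_simps)
  finally show ?case .
qed

lemma two_mult_pred_pow_self_le:
  assumes "(D::nat) > 0"
  shows "2 * (D - 1) ^ D \<le> D ^ D"
proof (cases D)
  case (Suc y)
  show ?thesis
  proof (cases "y = 0")
    case False
    have "y * (2 * y ^ Suc y) \<le> y ^ Suc y * (y + Suc y)" by (simp add: algebra_simps)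
    also have "\<dots> \<le> y * Suc y ^ Suc y" using bernoulli_inequality_nat[of y "Suc y"] by simp
    finally show ?thesis using False Suc by simp
  qed (simp add: Suc)
qed (use assms in simp)

lemma two_pow_mult_pred_pow_less:
  assumes "(D::nat) \<ge> 2" "N \<ge> D * (s + 1)"
  shows "2 ^ s * (D - 1) ^ N < D ^ N"
proof -
  have "(2 * (D - 1) ^ D) ^ (s + 1) \<le> (D ^ D) ^ (s + 1)"
    by (intro power_mono two_mult_pred_pow_self_le) (use assms(1) in auto)
  then have head: "2 ^ (s + 1) * (D - 1) ^ (D * (s + 1)) \<le> D ^ (D * (s + 1))"
    by (simp only: power_mult_distrib power_mult)
  have tail: "(D - 1) ^ (N - D * (s + 1)) \<le> D ^ (N - D * (s + 1))" by (intro power_mono) auto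
  have "2 ^ (s + 1) * (D - 1) ^ N
      = 2 ^ (s + 1) * (D - 1) ^ (D * (s + 1)) * (D - 1) ^ (N - D * (s + 1))"
    using assms(2) by (simp add: power_add[symmetric])
  also have "\<dots> \<le> D ^ (D * (s + 1)) * D ^ (N - D * (s + 1))" using head tail by (rule mult_le_mono)
  also have "\<dots> = D ^ N" using assms(2) by (simp add: power_add[symmetric])
  finally have "2 ^ (s + 1) * (D - 1) ^ N \<le> D ^ N" .
  moreover have "2 ^ s * (D - 1) ^ N < 2 ^ (s + 1) * (D - 1) ^ N" using assms(1) by simp
  ultimately show ?thesis by linarith
qed

lemma finite_card_poly_agreement:
  fixes a a' :: "nat \<Rightarrow> nat"
  assumes "i < n" "a i \<noteq> a' i"
  defines "Agr \<equiv> {x. (\<Sum>k<n. a k * x ^ k) = (\<Sum>k<n. a' k * x ^ k)}"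
  shows "finite Agr \<and> card Agr < n"
proof -
  define p :: "int poly" where "p = (\<Sum>k<n. monom (int (a k) - int (a' k)) k)"
  have coeff_p: "coeff p k = (if k < n then int (a k) - int (a' k) else 0)" for k
    unfolding p_def by (simp add: coeff_sum coeff_monom)
  have "p \<noteq> 0" using coeff_p[of i] assms(1,2) by (metis coeff_0 eq_iff_diff_eq_0 of_nat_eq_iff)
  have "degree p \<le> n - 1" by (rule degree_le) (auto simp: coeff_p)
  then have "degree p < n" using assms(1) by simp
  have "poly p (int x) = int (\<Sum>k<n. a k * x ^ k) - int (\<Sum>k<n. a' k * x ^ k)" for x
    unfolding p_def by (simp add: poly_sum poly_monom sum_subtractf algebra_simps)
  then have "poly p (int x) = 0" if "x \<in> Agr" for x
    using that unfolding Agr_def by (metis (mono_tags) diff_self mem_Collect_eq)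
  then have "int ` Agr \<subseteq> {y. poly p y = 0}" by auto
  moreover have "finite {y. poly p y = 0}" using \<open>p \<noteq> 0\<close> by (rule poly_roots_finite)
  ultimately have "finite Agr" "card (int ` Agr) \<le> card {y. poly p y = 0}"
    by (auto intro: card_mono dest: finite_subset simp: finite_image_iff)
  moreover have "card {y. poly p y = 0} \<le> degree p" using \<open>p \<noteq> 0\<close> by (rule card_poly_roots_bound)
  ultimately show ?thesis using \<open>degree p < n\<close> by (simp add: card_image)
qed

lemma card_Int_poly_graphs_less:
  fixes a a' :: "nat \<Rightarrow> nat"
  assumes "i < n" "a i \<noteq> a' i"
  shows "card ((\<lambda>x. (x, \<Sum>k<n. a k * x ^ k)) ` X \<inter> (\<lambda>x. (x, \<Sum>k<n. a' k * x ^ k)) ` X) < n"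
proof -
  define Agr where "Agr = {x. (\<Sum>k<n. a k * x ^ k) = (\<Sum>k<n. a' k * x ^ k)}"
  have "finite Agr" "card Agr < n"
    using finite_card_poly_agreement[of i n a a', OF assms] unfolding Agr_def by auto
  have "(\<lambda>x. (x, \<Sum>k<n. a k * x ^ k)) ` X \<inter> (\<lambda>x. (x, \<Sum>k<n. a' k * x ^ k)) ` X
      \<subseteq> (\<lambda>x. (x, \<Sum>k<n. a k * x ^ k)) ` Agr"
    unfolding Agr_def by auto
  then have "card ((\<lambda>x. (x, \<Sum>k<n. a k * x ^ k)) ` X \<inter> (\<lambda>x. (x, \<Sum>k<n. a' k * x ^ k)) ` X)
      \<le> card Agr"
    using \<open>finite Agr\<close> by (meson card_image_le card_mono finite_imageI order_trans)
  with \<open>card Agr < n\<close> show ?thesis by simp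
qed

lemma inj_on_mixed_radix_code: "inj_on (\<lambda>(x, y). b + x + j * y) ({..<j::nat} \<times> UNIV)"
proof (rule inj_onI, clarsimp)
  fix x y x' y' :: nat
  assume "x < j" "x' < j" "x + j * y = x' + j * y'"
  moreover from this have "x = x'" by (metis mod_mult_self2 mod_less)
  ultimately show "x = x' \<and> y = y'" by simp
qed

lemma mixed_radix_poly_less:
  fixes a :: "nat \<Rightarrow> nat"
  assumes "0 < n" "\<And>k. k < n \<Longrightarrow> a k < c" "x < j"
  shows "x + j * (\<Sum>k<n. a k * x ^ k) < 2 * c * n * j ^ (n + 1)"
proof -
  have "a k * x ^ k \<le> c * j ^ n" if "k < n" for k
  proof (rule mult_le_mono)
    show "a k \<le> c" using assms(2) that by (simp add: less_imp_le)
    have "x ^ k \<le> j ^ k" using assms(3) by (simp add: power_mono)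
    also have "\<dots> \<le> j ^ n" using that assms(3) by (intro power_increasing) auto
    finally show "x ^ k \<le> j ^ n" .
  qed
  then have "(\<Sum>k<n. a k * x ^ k) \<le> c * n * j ^ n"
    using sum_mono[of "{..<n}" "\<lambda>k. a k * x ^ k" "\<lambda>_. c * j ^ n"] by (simp add: ac_simps)
  with assms(3) have "x + j * (\<Sum>k<n. a k * x ^ k) < j + j * (c * n * j ^ n)"
    by (intro add_less_le_mono mult_le_mono2)
  also have "\<dots> \<le> 2 * c * n * j ^ (n + 1)"
  proof -
    have "0 < c" using assms(2)[of 0] assms(1) by simp
    have "j \<le> j ^ (n + 1)" using assms(3) by (intro self_le_power) auto
    also have "\<dots> \<le> c * n * j ^ (n + 1)" using \<open>0 < c\<close> assms(1) by simp
    finally show ?thesis by (simp add: ac_simps)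
  qed
  finally show ?thesis .
qed

text \<open>The members are the graphs \<open>{(x, f x) | x < j}\<close> of the \<open>c ^ n\<close> polynomials \<open>f\<close> of
  degree below \<open>n\<close> with coefficients below \<open>c\<close>, the point \<open>(x, y)\<close> being coded as
  \<open>b + x + j * y\<close>.\<close>
lemma almost_disjoint_family:
  assumes "0 < n" "n \<le> j"
  obtains F where "F \<subseteq> [{b..<b + 2 * c * n * j ^ (n + 1)}]\<^bsup>j\<^esup>" "card F = c ^ n"
    "\<And>M M'. M \<in> F \<Longrightarrow> M' \<in> F \<Longrightarrow> M \<noteq> M' \<Longrightarrow> card (M \<inter> M') < n"
proof -
  define pgraph where "pgraph a = (\<lambda>x. (x, \<Sum>k<n. a k * x ^ k)) ` {..<j}" for a :: "nat \<Rightarrow> nat"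
  define code where "code = (\<lambda>(x, y). b + x + j * y)"
  define Co where "Co = {..<n} \<rightarrow>\<^sub>E {..<c}"
  have code_inj: "inj_on code (pgraph a \<union> pgraph a')" for a a'
    unfolding code_def
    by (rule inj_on_subset[OF inj_on_mixed_radix_code]) (auto simp: pgraph_def)
  have card_graph: "card (code ` pgraph a) = j" for a
    using code_inj[of a a] by (simp add: card_image pgraph_def inj_on_def)
  have card_Int: "card (code ` pgraph a \<inter> code ` pgraph a') < n"
    if a: "a \<in> Co" "a' \<in> Co" "a \<noteq> a'" for a a'
  proof -
    obtain i where "i < n" "a i \<noteq> a' i"
      using PiE_ext[of a "{..<n}" "\<lambda>_. {..<c}" a'] a unfolding Co_def by auto
    then have "card (pgraph a \<inter> pgraph a') < n"
      unfolding pgraph_def by (rule card_Int_poly_graphs_less)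
    moreover have "code ` (pgraph a \<inter> pgraph a') = code ` pgraph a \<inter> code ` pgraph a'"
      by (rule inj_on_image_Int[OF code_inj]) auto
    moreover have "card (code ` (pgraph a \<inter> pgraph a')) = card (pgraph a \<inter> pgraph a')"
      by (rule card_image, rule inj_on_subset[OF code_inj[of a a']]) auto
    ultimately show ?thesis by simp
  qed
  have "code ` pgraph a \<subseteq> {b..<b + 2 * c * n * j ^ (n + 1)}" if "a \<in> Co" for a
    using that assms(1) mixed_radix_poly_less[of n a c _ j]
    by (force simp: pgraph_def code_def Co_def PiE_iff)
  moreover have "inj_on (\<lambda>a. code ` pgraph a) Co"
  proof (rule inj_onI, rule ccontr)
    fix a a' assume "a \<in> Co" "a' \<in> Co" "code ` pgraph a = code ` pgraph a'" "a \<noteq> a'"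
    then have "card (code ` pgraph a) < n" using card_Int[of a a'] by simp
    with card_graph assms(2) show False by simp
  qed
  ultimately show ?thesis
  proof (intro that[of "(\<lambda>a. code ` pgraph a) ` Co"])
    show "card ((\<lambda>a. code ` pgraph a) ` Co) = c ^ n"
      using \<open>inj_on (\<lambda>a. code ` pgraph a) Co\<close> by (simp add: card_image card_PiE Co_def)
  next
    fix M M' assume "M \<in> (\<lambda>a. code ` pgraph a) ` Co" "M' \<in> (\<lambda>a. code ` pgraph a) ` Co" "M \<noteq> M'"
    then show "card (M \<inter> M') < n" using card_Int by auto
  qed (use card_graph in \<open>auto simp: nsets_def intro: finite_subset\<close>)
qed

lemma nsets_disjoint_if_card_Int_less:
  assumes "finite M" "card (M \<inter> M') < n"
  shows "[M]\<^bsup>n\<^esup> \<inter> [M']\<^bsup>n\<^esup> = {}"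
proof -
  have "Z \<notin> [M']\<^bsup>n\<^esup>" if "Z \<in> [M]\<^bsup>n\<^esup>" for Z
  proof
    assume "Z \<in> [M']\<^bsup>n\<^esup>"
    with that have "n \<le> card (M \<inter> M')"
      using assms(1) card_mono[of "M \<inter> M'" Z] by (simp add: nsets_def)
    with assms(2) show False by simp
  qed
  then show ?thesis by blast
qed

text \<open>For \<open>A \<subseteq> [G]\<^bsup>m\<^esup>\<close>, the set \<open>{Z \<in> [G]\<^bsup>n\<^esup>. [Z]\<^bsup>m\<^esup> \<subseteq> A}\<close> is
  \<open>\<lambda>\<^bsup>(n-m)\<^esup> A\<close> restricted to \<open>G\<close>.\<close>
definition diagonal_block :: "nat \<Rightarrow> nat \<Rightarrow> nat \<Rightarrow> nat set \<Rightarrow> nat set set \<Rightarrow> bool" where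
  "diagonal_block n m r G \<chi> \<longleftrightarrow> \<chi> \<subseteq> [G]\<^bsup>n\<^esup> \<and>
     (\<forall>A \<in> {..<r} \<rightarrow>\<^sub>E Pow ([G]\<^bsup>m\<^esup>). \<exists>M \<in> [G]\<^bsup>(r + n)\<^esup>.
        \<forall>Z \<in> [M]\<^bsup>n\<^esup>. Z \<in> \<chi> \<longleftrightarrow> \<not> (\<exists>i<r. [Z]\<^bsup>m\<^esup> \<subseteq> A i))"

lemma diagonal_blockI:
  assumes "finite G" "F \<subseteq> [G]\<^bsup>(r + n)\<^esup>"
    and "\<And>M M'. M \<in> F \<Longrightarrow> M' \<in> F \<Longrightarrow> M \<noteq> M' \<Longrightarrow> card (M \<inter> M') < n"
    and "(2::nat) ^ ((card G choose m) * r) * (2 ^ (r + n choose n) - 1) ^ card F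
           < (2 ^ (r + n choose n)) ^ card F"
  obtains \<chi> where "diagonal_block n m r G \<chi>"
proof -
  define D where "D = (2::nat) ^ (r + n choose n)"
  define lam_union where "lam_union A = {Z \<in> [G]\<^bsup>n\<^esup>. \<exists>i<r. [Z]\<^bsup>m\<^esup> \<subseteq> A i}" for A
  define \<V> where "\<V> = lam_union ` ({..<r} \<rightarrow>\<^sub>E Pow ([G]\<^bsup>m\<^esup>))"
  have "finite F" using assms(1,2) finite_imp_finite_nsets finite_subset by blast
  have "finite ({..<r} \<rightarrow>\<^sub>E Pow ([G]\<^bsup>m\<^esup>))"
    using assms(1) by (simp add: finite_PiE finite_imp_finite_nsets)
  then have "finite \<V>" unfolding \<V>_def by simp
  have "card \<V> \<le> card ({..<r} \<rightarrow>\<^sub>E Pow ([G]\<^bsup>m\<^esup>))"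
    unfolding \<V>_def using \<open>finite ({..<r} \<rightarrow>\<^sub>E _)\<close> by (rule card_image_le)
  also have "card ({..<r} \<rightarrow>\<^sub>E Pow ([G]\<^bsup>m\<^esup>)) = 2 ^ ((card G choose m) * r)"
    using assms(1) by (simp add: card_PiE card_Pow finite_imp_finite_nsets power_mult)
  finally have "card \<V> * (D - 1) ^ card F \<le> 2 ^ ((card G choose m) * r) * (D - 1) ^ card F"
    by (rule mult_le_mono1)
  then have "card \<V> * (D - 1) ^ card F < D ^ card F"
    using assms(4) unfolding D_def by linarith
  moreover have "finite ([M]\<^bsup>n\<^esup>) \<and> 2 ^ card ([M]\<^bsup>n\<^esup>) \<le> D" if "M \<in> F" for M
  proof -
    have "finite M" "card M = r + n" using that assms(2) by (auto simp: nsets_def)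
    then show ?thesis by (simp add: D_def finite_imp_finite_nsets)
  qed
  moreover have "[M]\<^bsup>n\<^esup> \<inter> [M']\<^bsup>n\<^esup> = {}" if "M \<in> F" "M' \<in> F" "M \<noteq> M'" for M M'
    using that assms(2,3) by (intro nsets_disjoint_if_card_Int_less) (auto simp: nsets_def)
  ultimately obtain \<chi> where \<chi>: "\<chi> \<subseteq> (\<Union>M\<in>F. [M]\<^bsup>n\<^esup>)"
      "\<forall>V\<in>\<V>. \<exists>M\<in>F. \<forall>Z\<in>[M]\<^bsup>n\<^esup>. Z \<in> \<chi> \<longleftrightarrow> Z \<notin> V"
    using patchwise_diagonalization[of F \<V> "\<lambda>M. [M]\<^bsup>n\<^esup>" D] \<open>finite F\<close> \<open>finite \<V>\<close> by blast
  have sub: "[M]\<^bsup>n\<^esup> \<subseteq> [G]\<^bsup>n\<^esup>" if "M \<in> F" for M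
    using that assms(2) by (auto simp: nsets_def)
  show ?thesis
  proof (rule that, unfold diagonal_block_def, intro conjI ballI)
    show "\<chi> \<subseteq> [G]\<^bsup>n\<^esup>" using \<chi>(1) sub by blast
  next
    fix A assume "A \<in> {..<r} \<rightarrow>\<^sub>E Pow ([G]\<^bsup>m\<^esup>)"
    then obtain M where "M \<in> F" "\<forall>Z\<in>[M]\<^bsup>n\<^esup>. Z \<in> \<chi> \<longleftrightarrow> Z \<notin> lam_union A"
      using \<chi>(2) unfolding \<V>_def by blast
    with sub[OF \<open>M \<in> F\<close>] assms(2)
    show "\<exists>M\<in>[G]\<^bsup>(r + n)\<^esup>. \<forall>Z\<in>[M]\<^bsup>n\<^esup>. Z \<in> \<chi> \<longleftrightarrow> \<not> (\<exists>i<r. [Z]\<^bsup>m\<^esup> \<subseteq> A i)"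
      unfolding lam_union_def by blast
  qed
qed

text \<open>The constant \<open>c\<close> is chosen so that \<open>c ^ (m + 1) \<ge> D * (r * E * c ^ m + 1)\<close>: then the
  \<open>c ^ n\<close> members of the family outweigh, as in \<open>two_pow_mult_pred_pow_less\<close>, the at most
  \<open>2 ^ (r * E * c ^ m)\<close> unions of \<open>r\<close> sets \<open>\<lambda>\<^bsup>(n-m)\<^esup> A\<close> inside a block of size at most
  \<open>2 * c * n * j ^ (n + 1)\<close>.\<close>
lemma exists_diagonal_block:
  assumes "m < n"
  obtains G \<chi> b' where "G \<subseteq> {b..<b'}" "b \<le> b'" "diagonal_block n m r G \<chi>"
proof -
  define j where "j = r + n"
  define D where "D = (2::nat) ^ (j choose n)"
  define E where "E = (2 * n * j ^ (n + 1)) ^ m"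
  define c where "c = D * (r * E + 1)"
  define b' where "b' = b + 2 * c * n * j ^ (n + 1)"
  obtain F where F: "F \<subseteq> [{b..<b'}]\<^bsup>j\<^esup>" "card F = c ^ n"
    "\<And>M M'. M \<in> F \<Longrightarrow> M' \<in> F \<Longrightarrow> M \<noteq> M' \<Longrightarrow> card (M \<inter> M') < n"
    using almost_disjoint_family[of n j b c] assms unfolding b'_def j_def by auto
  define G where "G = \<Union>F"
  have G: "G \<subseteq> {b..<b'}" "F \<subseteq> [G]\<^bsup>j\<^esup>" using F(1) by (auto simp: G_def nsets_def)
  have "0 < j choose n" by (simp add: j_def zero_less_binomial_iff)
  then have "D \<ge> 2" unfolding D_def using self_le_power[of "2::nat" "j choose n"] by simp
  then have "c \<ge> 1" by (simp add: c_def)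
  have "card G choose m \<le> card G ^ m"
    by (cases "m \<le> card G") (simp_all add: binomial_le_pow binomial_eq_0)
  also have "\<dots> \<le> (2 * c * n * j ^ (n + 1)) ^ m"
    using card_mono[OF _ G(1)] by (intro power_mono) (simp_all add: b'_def)
  also have "\<dots> = E * c ^ m" by (simp add: E_def power_mult_distrib ac_simps)
  finally have "2 ^ ((card G choose m) * r) \<le> (2::nat) ^ (r * E * c ^ m)"
    by (intro power_increasing) (simp_all add: ac_simps)
  moreover have "D * (r * E * c ^ m + 1) \<le> c ^ n"
  proof -
    have "D * (r * E * c ^ m + 1) \<le> D * (r * E + 1) * c ^ m"
      using \<open>c \<ge> 1\<close> by (simp add: algebra_simps)
    also have "\<dots> = c ^ (m + 1)" by (simp add: c_def)
    also have "\<dots> \<le> c ^ n" using assms \<open>c \<ge> 1\<close> by (intro power_increasing) auto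
    finally show ?thesis .
  qed
  then have "2 ^ (r * E * c ^ m) * (D - 1) ^ card F < D ^ card F"
    using \<open>D \<ge> 2\<close> F(2) by (intro two_pow_mult_pred_pow_less) auto
  ultimately have "2 ^ ((card G choose m) * r) * (D - 1) ^ card F < D ^ card F"
    by (meson le_less_trans mult_le_mono1)
  then obtain \<chi> where "diagonal_block n m r G \<chi>"
    using diagonal_blockI[of G F r n m] G F(3) finite_subset[OF G(1)]
    unfolding D_def j_def by auto
  moreover have "b \<le> b'" by (simp add: b'_def)
  ultimately show ?thesis using G(1) that by blast
qed

lemma exists_disjoint_diagonal_blocks:
  assumes "m < n"
  obtains G :: "nat \<Rightarrow> nat set" and \<chi> where "\<And>r. diagonal_block n m r (G r) (\<chi> r)"
    and "\<And>r r'. r \<noteq> r' \<Longrightarrow> G r \<inter> G r' = {}"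
proof -
  have "\<forall>r b. \<exists>G \<chi> b'. G \<subseteq> {b..<b'} \<and> b \<le> b' \<and> diagonal_block n m r G \<chi>"
  proof (intro allI)
    fix r b
    obtain G \<chi> b' where "G \<subseteq> {b..<b'}" "b \<le> b'" "diagonal_block n m r G \<chi>"
      using exists_diagonal_block[OF assms] .
    then show "\<exists>G \<chi> b'. G \<subseteq> {b..<b'} \<and> b \<le> b' \<and> diagonal_block n m r G \<chi>" by blast
  qed
  then obtain GG XX BB where blocks:
    "\<And>r b. GG r b \<subseteq> {b..<BB r b} \<and> b \<le> BB r b \<and> diagonal_block n m r (GG r b) (XX r b)"
    by metis
  define off where "off = rec_nat 0 BB"
  have off_Suc: "off (Suc r) = BB r (off r)" for r by (simp add: off_def)
  have "mono off" using blocks by (simp add: mono_iff_le_Suc off_Suc)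
  have block_in: "GG r (off r) \<subseteq> {off r..<off (Suc r)}" for r using blocks by (simp add: off_Suc)
  have "GG r (off r) \<inter> GG r' (off r') = {}" if "r < r'" for r r'
  proof -
    have "off (Suc r) \<le> off r'" using \<open>mono off\<close> that by (simp add: monoD)
    then show ?thesis using block_in[of r] block_in[of r'] by fastforce
  qed
  then show ?thesis
    using blocks by (intro that[of "\<lambda>r. GG r (off r)" "\<lambda>r. XX r (off r)"]) (auto simp: neq_iff)
qed

lemma mem_Union_diagonal_blocks_iff:
  assumes "0 < n" "\<And>r. diagonal_block n m r (G r) (\<chi> r)"
    and "\<And>r r'. r \<noteq> r' \<Longrightarrow> G r \<inter> G r' = {}" and "Z \<in> [G r]\<^bsup>n\<^esup>"
  shows "Z \<in> (\<Union>r. \<chi> r) \<longleftrightarrow> Z \<in> \<chi> r"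
proof
  assume "Z \<in> (\<Union>r. \<chi> r)"
  then obtain r' where "Z \<in> \<chi> r'" by blast
  then have "Z \<subseteq> G r'" using assms(2)[of r'] by (auto simp: diagonal_block_def nsets_def)
  moreover have "Z \<subseteq> G r" "Z \<noteq> {}" using assms(1,4) by (auto simp: nsets_def)
  ultimately have "r' = r" using assms(3)[of r' r] by blast
  then show "Z \<in> \<chi> r" using \<open>Z \<in> \<chi> r'\<close> by simp
qed auto

lemma psi_closed_mem_iff:
  assumes "psi_closed n m T" "Z \<in> [UNIV]\<^bsup>n\<^esup>"
  shows "Z \<in> T \<longleftrightarrow> [Z]\<^bsup>m\<^esup> \<subseteq> shadow n m T"
  using assms unfolding psi_closed_def psi_def lam_def by blast

lemma thickI:
  assumes "\<And>j. \<exists>M. finite M \<and> j \<le> card M \<and> [M]\<^bsup>n\<^esup> \<subseteq> W"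
  shows "thick n W"
  unfolding thick_def
proof (intro allI impI)
  fix j
  obtain M where "finite M" "j \<le> card M" "[M]\<^bsup>n\<^esup> \<subseteq> W" using assms by blast
  moreover obtain s where "s \<subseteq> M" "card s = j" using obtain_subset_with_card_n \<open>j \<le> card M\<close> by metis
  ultimately have "s \<in> [UNIV]\<^bsup>j\<^esup>" "[s]\<^bsup>n\<^esup> \<subseteq> W"
    using nsets_mono[of s M n] finite_subset by (auto simp: nsets_def)
  then show "\<exists>s\<in>[UNIV]\<^bsup>j\<^esup>. [s]\<^bsup>n\<^esup> \<subseteq> W" by blast
qed

text \<open>Inside a block each closed set \<open>T\<close> is \<open>\<lambda>\<^bsup>(n-m)\<^esup>\<close> of its shadow, so the block of index
  \<open>r \<ge> k\<close> contains an \<open>(r + n)\<close>-set all of whose \<open>n\<close>-subsets lie in the symmetric difference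
  of \<open>S\<close> and any union of \<open>k\<close> closed sets.\<close>
lemma not_near_closed_Union_diagonal_blocks:
  assumes "m < n" "\<And>r. diagonal_block n m r (G r) (\<chi> r)"
    and "\<And>r r'. r \<noteq> r' \<Longrightarrow> G r \<inter> G r' = {}"
  shows "\<not> near_closed n m (\<Union>r. \<chi> r)"
proof
  define S where "S = (\<Union>r. \<chi> r)"
  assume "near_closed n m (\<Union>r. \<chi> r)"
  then obtain k :: nat and Ts where closed: "\<forall>i<k. psi_closed n m (Ts i)"
    and thin: "thin n ((S - (\<Union>i<k. Ts i)) \<union> ((\<Union>i<k. Ts i) - S))"
    unfolding near_closed_def in_thin_ideal_def S_def by blast
  have "thick n ((S - (\<Union>i<k. Ts i)) \<union> ((\<Union>i<k. Ts i) - S))"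
  proof (rule thickI)
    fix j :: nat
    define r where "r = max k j"
    define A where "A = (\<lambda>i\<in>{..<r}. if i < k then shadow n m (Ts i) \<inter> [G r]\<^bsup>m\<^esup> else {})"
    have "A \<in> {..<r} \<rightarrow>\<^sub>E Pow ([G r]\<^bsup>m\<^esup>)" by (auto simp: A_def)
    then obtain M where M: "M \<in> [G r]\<^bsup>(r + n)\<^esup>"
      "\<And>Z. Z \<in> [M]\<^bsup>n\<^esup> \<Longrightarrow> Z \<in> \<chi> r \<longleftrightarrow> \<not> (\<exists>i<r. [Z]\<^bsup>m\<^esup> \<subseteq> A i)"
      using assms(2)[of r] unfolding diagonal_block_def by blast
    have "Z \<in> S \<longleftrightarrow> Z \<notin> (\<Union>i<k. Ts i)" if "Z \<in> [M]\<^bsup>n\<^esup>" for Z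
    proof -
      have "Z \<subseteq> M" "finite Z" "card Z = n" using that by (auto simp: nsets_def)
      moreover have "M \<subseteq> G r" using M(1) by (simp add: nsets_def)
      ultimately have Z: "Z \<in> [G r]\<^bsup>n\<^esup>" "Z \<in> [UNIV]\<^bsup>n\<^esup>" "[Z]\<^bsup>m\<^esup> \<noteq> {}"
        using assms(1) by (auto simp: nsets_def[of _ n] nsets_eq_empty_iff)
      then have "[Z]\<^bsup>m\<^esup> \<subseteq> A i \<longleftrightarrow> i < k \<and> [Z]\<^bsup>m\<^esup> \<subseteq> shadow n m (Ts i)" if "i < r" for i
        using that nsets_mono[of Z "G r" m] by (auto simp: A_def nsets_def[of _ n])
      then have "(\<exists>i<r. [Z]\<^bsup>m\<^esup> \<subseteq> A i) \<longleftrightarrow> (\<exists>i<k. [Z]\<^bsup>m\<^esup> \<subseteq> shadow n m (Ts i))"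
        unfolding r_def by (metis max.strict_coboundedI1)
      also have "\<dots> \<longleftrightarrow> Z \<in> (\<Union>i<k. Ts i)"
        using closed psi_closed_mem_iff[OF _ Z(2)] by blast
      moreover have "Z \<in> S \<longleftrightarrow> Z \<in> \<chi> r"
        unfolding S_def
        by (rule mem_Union_diagonal_blocks_iff[OF _ assms(2,3) Z(1)]) (use assms(1) in simp)
      ultimately show ?thesis using M(2) that by blast
    qed
    then show "\<exists>M. finite M \<and> j \<le> card M \<and> [M]\<^bsup>n\<^esup> \<subseteq> (S - (\<Union>i<k. Ts i)) \<union> ((\<Union>i<k. Ts i) - S)"
      using M(1) by (intro exI[of _ M]) (auto simp: nsets_def r_def)
  qed
  with thin show False by (simp add: thin_def)
qed

theorem mainTheorem12:
  fixes m n :: nat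
  assumes "m < n"
  shows "\<exists>S. S \<subseteq> nsets (UNIV::nat set) n \<and> \<not> near_closed n m S"
proof -
  obtain G \<chi> where blocks: "\<And>r. diagonal_block n m r (G r) (\<chi> r)"
    and disjoint: "\<And>r r'. r \<noteq> r' \<Longrightarrow> G r \<inter> G r' = {}"
    using exists_disjoint_diagonal_blocks[OF assms] by metis
  have "(\<Union>r. \<chi> r) \<subseteq> nsets UNIV n"
    using blocks by (auto simp: diagonal_block_def nsets_def)
  with not_near_closed_Union_diagonal_blocks[OF assms blocks disjoint] show ?thesis by blast
qed

end
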